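(* Let $\mu>0$, $\lambda\ge0$, $k_M\in\mathbb{R}$, and let $k$ be the solution of $$k''=-\tfrac12k^3-\lambda k+\mu,\qquad k(0)=k_M,\quad k'(0)=0.$$ Assume $k$ is nonconstant and $k_M=\max k$. Then $k$ is defined and bounded on all of $\mathbb{R}$, and there exist real constants $\alpha,\beta,\gamma$ with $\gamma\in(-1,0)$, $\omega>0$ and $m\in(0,1)$ such that $$k(s)=\frac{\alpha\,\mathrm{cn}(\omega s\mid m)+\beta}{\gamma\,\mathrm{cn}(\omega s\mid m)+1}\qquad\text{for all }s\in\mathbb{R},$$ where $\mathrm{cn}(\cdot\mid m)$ is the Jacobi elliptic cosine function with parameter $m$.
   Context: The Jacobi elliptic function $y(u)=\mathrm{cn}(u\mid m)$, $m\in(0,1)$, is the solution of $(y')^2=(1-y^2)(1-m+my^2)$ with $y(0)=1$ (equivalently $\mathrm{cn}(u\mid m)=\cos\varphi$ where $u=\int_0^\varphi(1-m\sin^2\psi)^{-1/2}d\psi$). *)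

theory Defs
  imports "HOL-Analysis.Analysis"
begin

definition elliptic_F :: "real \<Rightarrow> real \<Rightarrow> real" where
  "elliptic_F m phi =
     (if 0 \<le> phi then integral {0..phi} (\<lambda>psi. 1 / sqrt (1 - m * (sin psi)\<^sup>2))
      else - integral {phi..0} (\<lambda>psi. 1 / sqrt (1 - m * (sin psi)\<^sup>2)))"

definition jacobi_am :: "real \<Rightarrow> real \<Rightarrow> real" where
  "jacobi_am m u = (THE phi. elliptic_F m phi = u)"

definition jacobi_cn :: "real \<Rightarrow> real \<Rightarrow> real" where
  "jacobi_cn m u = cos (jacobi_am m u)"

definition curv_ode_sol ::
  "real \<Rightarrow> real \<Rightarrow> real \<Rightarrow> (real \<Rightarrow> real) \<Rightarrow> (real \<Rightarrow> real) \<Rightarrow> real set \<Rightarrow> bool" where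
  "curv_ode_sol mu lam kM k dk I \<longleftrightarrow>
     open I \<and> is_interval I \<and> 0 \<in> I \<and> k 0 = kM \<and> dk 0 = 0 \<and>
     (\<forall>s\<in>I. (k has_real_derivative dk s) (at s)) \<and>
     (\<forall>s\<in>I. (dk has_real_derivative (- ((k s) ^ 3) / 2 - lam * k s + mu)) (at s))"

definition curv_ode_maximal_sol ::
  "real \<Rightarrow> real \<Rightarrow> real \<Rightarrow> (real \<Rightarrow> real) \<Rightarrow> (real \<Rightarrow> real) \<Rightarrow> real set \<Rightarrow> bool" where
  "curv_ode_maximal_sol mu lam kM k dk I \<longleftrightarrow>
     curv_ode_sol mu lam kM k dk I \<and>
     (\<forall>h dh J. curv_ode_sol mu lam kM h dh J \<longrightarrow> J \<subseteq> I)"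

end

theory Submission
  imports Defs
begin

(*
  The solution is found explicitly.  Because kM is the maximum of a nonconstant
  solution, the force g(x) = -x^3/2 - lam x + mu is negative at x = kM (if it vanished, k would
  be the constant kM; if it were positive, k would rise above kM).  For mu > 0 this forces
  kM > 0 and produces a second turning value km in (-kM, kM), the other solution of the energy
  balance  mu = (kM + km) (4 lam + kM^2 + km^2) / 8.  From kM, km and lam we write down
  alpha, beta, gamma, omega and m and verify, with the derivative formulas for the Jacobi
  functions sn, cn, dn, that  K(s) = (alpha cn(omega s | m) + beta) / (gamma cn(omega s | m) + 1)
  solves the same initial value problem on the whole real line.  Uniqueness of solutions
  (a Gronwall estimate for the energy (k - h)^2 + (k' - h')^2) and maximality of I then give
  I = UNIV and k = K; boundedness follows from |cn| <= 1 and |gamma| < 1.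
*)

section \<open>Jacobi elliptic functions\<close>

text \<open>The integrand of the elliptic integral of the first kind.  It is continuous and positive
  for every parameter m < 1, so that F(. | m) is a strictly increasing C^1 function.\<close>
definition elliptic_integrand :: "real \<Rightarrow> real \<Rightarrow> real" where
  "elliptic_integrand m x = 1 / sqrt (1 - m * (sin x)\<^sup>2)"

lemma elliptic_radicand_pos:
  fixes m x :: real
  assumes "m < 1"
  shows "0 < 1 - m * (sin x)\<^sup>2"
proof (cases "m \<ge> 0")
  case True
  have "(sin x)\<^sup>2 \<le> 1" by (simp add: sin_squared_eq)
  then have "m * (sin x)\<^sup>2 \<le> m" using True mult_left_mono[of "(sin x)\<^sup>2" 1 m] by simp
  then show ?thesis using assms by linarith
next
  case False
  then have "m * (sin x)\<^sup>2 \<le> 0" by (simp add: mult_nonpos_nonneg)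
  then show ?thesis by linarith
qed

lemma elliptic_integrand_pos: "m < 1 \<Longrightarrow> 0 < elliptic_integrand m x"
  using elliptic_radicand_pos[of m x] by (simp add: elliptic_integrand_def)

text \<open>For 0 \<le> m the integrand is at least 1, hence F grows at least like the identity.\<close>
lemma elliptic_integrand_ge_1:
  assumes "0 \<le> m" "m < 1"
  shows "1 \<le> elliptic_integrand m x"
proof -
  have "sqrt (1 - m * (sin x)\<^sup>2) \<le> 1" using assms by simp
  moreover have "0 < sqrt (1 - m * (sin x)\<^sup>2)" using elliptic_radicand_pos[OF assms(2)] by simp
  ultimately show ?thesis by (simp add: elliptic_integrand_def)
qed

lemma continuous_on_elliptic_integrand: "m < 1 \<Longrightarrow> continuous_on S (elliptic_integrand m)"
  unfolding elliptic_integrand_def using elliptic_radicand_pos[of m]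
  by (intro continuous_intros) (auto simp: less_imp_neq[symmetric])

lemma elliptic_F_eq:
  "elliptic_F m phi = (if 0 \<le> phi then integral {0..phi} (elliptic_integrand m)
                       else - integral {phi..0} (elliptic_integrand m))"
  by (simp add: elliptic_F_def elliptic_integrand_def[abs_def])

lemma elliptic_F_zero [simp]: "elliptic_F m 0 = 0"
  by (simp add: elliptic_F_eq)

text \<open>Fundamental theorem of calculus for the signed integral F.  Near x, F differs by a
  constant from the integral over [-n, y], whose derivative is known.\<close>
lemma elliptic_F_has_derivative:
  assumes "m < 1"
  shows "(elliptic_F m has_real_derivative elliptic_integrand m x) (at x)"
proof -
  define n where "n = \<bar>x\<bar> + 1"
  define G where "G y = integral {-n..y} (elliptic_integrand m) - integral {-n..0} (elliptic_integrand m)"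
    for y
  have int: "elliptic_integrand m integrable_on {a..b}" for a b
    by (rule integrable_continuous_interval[OF continuous_on_elliptic_integrand[OF assms]])
  have n0: "n > 0" by (simp add: n_def)
  have F_G: "elliptic_F m y = G y" if "-n < y" for y
  proof (cases "0 \<le> y")
    case True
    have "integral {-n..0} (elliptic_integrand m) + integral {0..y} (elliptic_integrand m)
          = integral {-n..y} (elliptic_integrand m)"
      by (rule Henstock_Kurzweil_Integration.integral_combine) (use True n0 int in auto)
    then show ?thesis using True by (simp add: elliptic_F_eq G_def)
  next
    case False
    have "integral {-n..y} (elliptic_integrand m) + integral {y..0} (elliptic_integrand m)
          = integral {-n..0} (elliptic_integrand m)"
      by (rule Henstock_Kurzweil_Integration.integral_combine) (use False that int in auto)
    then show ?thesis using False by (simp add: elliptic_F_eq G_def)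
  qed
  have "((\<lambda>y. integral {-n..y} (elliptic_integrand m)) has_real_derivative elliptic_integrand m x)
          (at x within {-n..n})"
    by (rule integral_has_real_derivative[OF continuous_on_elliptic_integrand[OF assms]])
       (auto simp: n_def)
  then have "((\<lambda>y. integral {-n..y} (elliptic_integrand m)) has_real_derivative elliptic_integrand m x)
               (at x)"
    using at_within_Icc_at[of "-n" x n] by (simp add: n_def)
  then have "(G has_real_derivative elliptic_integrand m x) (at x)"
    unfolding G_def by (auto intro!: derivative_eq_intros)
  then show ?thesis
    by (rule has_field_derivative_transform_within_open[where S="{-n<..}"]) (auto simp: F_G n_def)
qed

lemma isCont_elliptic_F: "m < 1 \<Longrightarrow> isCont (elliptic_F m) x"
  using elliptic_F_has_derivative DERIV_isCont by blast

lemma strict_mono_elliptic_F: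
  assumes "m < 1"
  shows "strict_mono (elliptic_F m)"
proof (rule strict_monoI)
  fix a b :: real
  assume "a < b"
  then show "elliptic_F m a < elliptic_F m b"
    by (rule DERIV_pos_imp_increasing)
       (use elliptic_F_has_derivative[OF assms] elliptic_integrand_pos[OF assms] in blast)
qed

lemma elliptic_F_minus_id_mono:
  assumes "0 \<le> m" "m < 1" "a \<le> b"
  shows "elliptic_F m a - a \<le> elliptic_F m b - b"
proof -
  have d: "((\<lambda>y. elliptic_F m y - y) has_real_derivative elliptic_integrand m x - 1) (at x)" for x
    by (rule DERIV_diff[OF elliptic_F_has_derivative[OF assms(2)] DERIV_ident])
  show ?thesis
    using assms(3) by (rule DERIV_nonneg_imp_nondecreasing[of a b "\<lambda>y. elliptic_F m y - y"])
      (use d elliptic_integrand_ge_1[OF assms(1,2)] in \<open>meson diff_ge_0_iff_ge\<close>)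
qed

lemma elliptic_F_surj:
  assumes "0 \<le> m" "m < 1"
  shows "\<exists>phi. elliptic_F m phi = u"
proof (cases "0 \<le> u")
  case True
  then have "u \<le> elliptic_F m u" using elliptic_F_minus_id_mono[OF assms True] by simp
  then show ?thesis
    using IVT[of "elliptic_F m" 0 u u] True isCont_elliptic_F[OF assms(2)] by auto
next
  case False
  then have "elliptic_F m u \<le> u" using elliptic_F_minus_id_mono[OF assms, of u 0] by simp
  then show ?thesis
    using IVT[of "elliptic_F m" u u 0] False isCont_elliptic_F[OF assms(2)] by auto
qed

lemma elliptic_F_eq_iff: "m < 1 \<Longrightarrow> elliptic_F m a = elliptic_F m b \<longleftrightarrow> a = b"
  using strict_mono_elliptic_F by (simp add: strict_mono_eq)

lemma elliptic_F_jacobi_am: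
  assumes "0 \<le> m" "m < 1"
  shows "elliptic_F m (jacobi_am m u) = u"
proof -
  obtain phi where phi: "elliptic_F m phi = u" using elliptic_F_surj[OF assms] by blast
  then have "\<exists>!phi. elliptic_F m phi = u"
    by (intro ex1I[of _ phi]) (auto simp: elliptic_F_eq_iff[OF assms(2)] dest: sym)
  then show ?thesis unfolding jacobi_am_def by (rule theI')
qed

lemma jacobi_am_elliptic_F:
  assumes "0 \<le> m" "m < 1"
  shows "jacobi_am m (elliptic_F m phi) = phi"
  using elliptic_F_jacobi_am[OF assms, of "elliptic_F m phi"] by (simp add: elliptic_F_eq_iff[OF assms(2)])

text \<open>Inverse function rule: am' = 1 / F'(am) = sqrt (1 - m sin^2 am).\<close>
lemma jacobi_am_has_derivative:
  assumes "0 \<le> m" "m < 1"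
  shows "(jacobi_am m has_real_derivative sqrt (1 - m * (sin (jacobi_am m u))\<^sup>2)) (at u)"
proof -
  have cont: "isCont (jacobi_am m) u"
    using isCont_inverse_function[of 1 "jacobi_am m u" "jacobi_am m" "elliptic_F m"]
      jacobi_am_elliptic_F[OF assms] isCont_elliptic_F[OF assms(2)] elliptic_F_jacobi_am[OF assms]
    by auto
  have "(jacobi_am m has_real_derivative inverse (elliptic_integrand m (jacobi_am m u))) (at u)"
    by (rule DERIV_inverse_function[where a="u - 1" and b="u + 1"])
       (use elliptic_F_has_derivative[OF assms(2)] elliptic_integrand_pos[OF assms(2)]
          elliptic_F_jacobi_am[OF assms] cont in \<open>auto simp: less_imp_neq[symmetric]\<close>)
  then show ?thesis by (simp add: elliptic_integrand_def)
qed

definition jacobi_sn :: "real \<Rightarrow> real \<Rightarrow> real" where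
  "jacobi_sn m u = sin (jacobi_am m u)"

definition jacobi_dn :: "real \<Rightarrow> real \<Rightarrow> real" where
  "jacobi_dn m u = sqrt (1 - m * (jacobi_sn m u)\<^sup>2)"

lemma jacobi_cn_squared: "(jacobi_cn m u)\<^sup>2 = 1 - (jacobi_sn m u)\<^sup>2"
  by (simp add: jacobi_cn_def jacobi_sn_def cos_squared_eq)

lemma jacobi_dn_squared: "m < 1 \<Longrightarrow> (jacobi_dn m u)\<^sup>2 = 1 - m * (jacobi_sn m u)\<^sup>2"
  using elliptic_radicand_pos[of m "jacobi_am m u"] by (simp add: jacobi_dn_def jacobi_sn_def)

lemma abs_jacobi_cn_le_1: "\<bar>jacobi_cn m u\<bar> \<le> 1"
  by (simp add: jacobi_cn_def)

lemma jacobi_am_zero: "0 \<le> m \<Longrightarrow> m < 1 \<Longrightarrow> jacobi_am m 0 = 0"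
  using jacobi_am_elliptic_F[of m 0] by simp

lemma jacobi_cn_zero: "0 \<le> m \<Longrightarrow> m < 1 \<Longrightarrow> jacobi_cn m 0 = 1"
  by (simp add: jacobi_cn_def jacobi_am_zero)

lemma jacobi_sn_zero: "0 \<le> m \<Longrightarrow> m < 1 \<Longrightarrow> jacobi_sn m 0 = 0"
  by (simp add: jacobi_sn_def jacobi_am_zero)

lemma jacobi_cn_scaled_has_derivative:
  assumes "0 \<le> m" "m < 1"
  shows "((\<lambda>s. jacobi_cn m (w * s)) has_real_derivative
           - w * jacobi_sn m (w * s) * jacobi_dn m (w * s)) (at s within S)"
  unfolding jacobi_cn_def jacobi_sn_def jacobi_dn_def
  by (auto intro!: derivative_eq_intros DERIV_chain2[OF jacobi_am_has_derivative[OF assms]])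

lemma jacobi_sn_scaled_has_derivative:
  assumes "0 \<le> m" "m < 1"
  shows "((\<lambda>s. jacobi_sn m (w * s)) has_real_derivative
           w * jacobi_cn m (w * s) * jacobi_dn m (w * s)) (at s within S)"
  unfolding jacobi_cn_def jacobi_sn_def jacobi_dn_def
  by (auto intro!: derivative_eq_intros DERIV_chain2[OF jacobi_am_has_derivative[OF assms]])

lemma jacobi_dn_scaled_has_derivative:
  assumes "0 \<le> m" "m < 1"
  shows "((\<lambda>s. jacobi_dn m (w * s)) has_real_derivative
           - w * m * jacobi_sn m (w * s) * jacobi_cn m (w * s)) (at s within S)"
proof -
  have "0 < 1 - m * (jacobi_sn m (w * s))\<^sup>2"
    unfolding jacobi_sn_def by (rule elliptic_radicand_pos[OF assms(2)])
  then show ?thesis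
    unfolding jacobi_dn_def
    by (auto intro!: derivative_eq_intros jacobi_sn_scaled_has_derivative[OF assms])
       (simp add: jacobi_dn_def field_simps power2_eq_square)
qed

section \<open>Uniqueness for the initial value problem\<close>

text \<open>Gronwall's inequality in the form needed here: a nonnegative function vanishing at 0 with
  |e'| \<le> C e vanishes on every interval [a, b] around 0, since e(x) exp(-C x) is nonincreasing
  to the right of 0 and e(x) exp(C x) is nondecreasing to the left of 0.\<close>
lemma gronwall_vanishes:
  fixes e e' :: "real \<Rightarrow> real" and a b C x :: real
  assumes "a \<le> 0" "0 \<le> b"
    and deriv: "\<And>x. a \<le> x \<Longrightarrow> x \<le> b \<Longrightarrow> (e has_real_derivative e' x) (at x)"
    and bound: "\<And>x. a \<le> x \<Longrightarrow> x \<le> b \<Longrightarrow> \<bar>e' x\<bar> \<le> C * e x"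
    and nonneg: "\<And>x. a \<le> x \<Longrightarrow> x \<le> b \<Longrightarrow> 0 \<le> e x" and e0: "e 0 = 0"
    and x: "a \<le> x" "x \<le> b"
  shows "e x = 0"
proof (cases "0 \<le> x")
  case True
  have "(\<lambda>y. e y * exp (- C * y)) x \<le> (\<lambda>y. e y * exp (- C * y)) 0"
  proof (rule DERIV_nonpos_imp_nonincreasing[OF True])
    fix y assume y: "0 \<le> y" "y \<le> x"
    have "((\<lambda>y. e y * exp (- C * y)) has_real_derivative
            e' y * exp (- C * y) + e y * (exp (- C * y) * (- C))) (at y)"
      using y x \<open>a \<le> 0\<close> by (auto intro!: derivative_eq_intros deriv)
    moreover have "e' y * exp (- C * y) + e y * (exp (- C * y) * (- C)) = (e' y - C * e y) * exp (- C * y)"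
      by (simp add: algebra_simps)
    moreover have "e' y - C * e y \<le> 0" using bound[of y] y x \<open>a \<le> 0\<close> by auto
    ultimately show "\<exists>z. ((\<lambda>y. e y * exp (- C * y)) has_real_derivative z) (at y) \<and> z \<le> 0"
      by (metis exp_gt_zero mult_nonpos_nonneg less_imp_le)
  qed
  then have "e x \<le> 0" using e0 by (simp add: mult_le_0_iff)
  then show ?thesis using nonneg[OF x] by linarith
next
  case False
  have "(\<lambda>y. e y * exp (C * y)) x \<le> (\<lambda>y. e y * exp (C * y)) 0"
  proof (rule DERIV_nonneg_imp_nondecreasing[of x 0 "\<lambda>y. e y * exp (C * y)"])
    show "x \<le> 0" using False by simp
    fix y assume y: "x \<le> y" "y \<le> 0"
    have "((\<lambda>y. e y * exp (C * y)) has_real_derivative e' y * exp (C * y) + e y * (exp (C * y) * C)) (at y)"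
      using y x \<open>0 \<le> b\<close> by (auto intro!: derivative_eq_intros deriv)
    moreover have "e' y * exp (C * y) + e y * (exp (C * y) * C) = (e' y + C * e y) * exp (C * y)"
      by (simp add: algebra_simps)
    moreover have "0 \<le> e' y + C * e y" using bound[of y] y x \<open>0 \<le> b\<close> by auto
    ultimately show "\<exists>z. ((\<lambda>y. e y * exp (C * y)) has_real_derivative z) (at y) \<and> 0 \<le> z"
      by (metis exp_gt_zero zero_le_mult_iff less_imp_le)
  qed
  then have "e x \<le> 0" using e0 by (simp add: mult_le_0_iff)
  then show ?thesis using nonneg[OF x] by linarith
qed

text \<open>Local Lipschitz estimate for the energy of the difference of two solutions: if both
  solutions are bounded by M, the derivative of (k - h)^2 + z^2, with z = k' - h', is
  controlled by the energy itself.\<close>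
lemma energy_derivative_bound:
  fixes k h z M lam mu :: real
  assumes "\<bar>k\<bar> \<le> M" "\<bar>h\<bar> \<le> M"
  shows "\<bar>2*(k-h)*z + 2*z*((- (k^3)/2 - lam*k + mu) - (- (h^3)/2 - lam*h + mu))\<bar>
        \<le> (1 + 3*M\<^sup>2/2 + \<bar>lam\<bar>) * ((k-h)\<^sup>2 + z\<^sup>2)"
proof -
  define L where "L = 3*M\<^sup>2/2 + \<bar>lam\<bar>"
  have force_diff: "(- (k^3)/2 - lam*k + mu) - (- (h^3)/2 - lam*h + mu)
                    = -(k-h)*((k\<^sup>2+k*h+h\<^sup>2)/2 + lam)"
    by (simp add: field_simps power3_eq_cube power2_eq_square)
  have M0: "0 \<le> M" using assms by linarith
  have "k\<^sup>2 \<le> M\<^sup>2" "h\<^sup>2 \<le> M\<^sup>2"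
    using power_mono[OF assms(1) abs_ge_zero, of 2] power_mono[OF assms(2) abs_ge_zero, of 2] by simp_all
  moreover have "\<bar>k*h\<bar> \<le> M\<^sup>2"
    using mult_mono[OF assms M0 abs_ge_zero] by (simp add: abs_mult power2_eq_square)
  then have "k*h \<le> M\<^sup>2" "-(k*h) \<le> M\<^sup>2" by (simp_all add: abs_le_iff)
  moreover have "0 \<le> k\<^sup>2" "0 \<le> h\<^sup>2" "0 \<le> M\<^sup>2" by simp_all
  ultimately have "k\<^sup>2+k*h+h\<^sup>2 \<le> 3*M\<^sup>2" "-(k\<^sup>2+k*h+h\<^sup>2) \<le> 3*M\<^sup>2"
    by linarith+
  moreover have "\<bar>X/2 + lam\<bar> \<le> Y/2 + \<bar>lam\<bar>" if "X \<le> Y" "-X \<le> Y" for X Y :: real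
    using that by (simp add: abs_le_iff) linarith
  ultimately have factor: "\<bar>(k\<^sup>2+k*h+h\<^sup>2)/2 + lam\<bar> \<le> L"
    unfolding L_def by blast
  have amgm: "2*\<bar>k-h\<bar>*\<bar>z\<bar> \<le> (k-h)\<^sup>2 + z\<^sup>2"
    using zero_le_power2[of "\<bar>k-h\<bar> - \<bar>z\<bar>"] by (simp add: power2_eq_square algebra_simps)
  have "\<bar>2*(k-h)*z + 2*z*(-(k-h)*((k\<^sup>2+k*h+h\<^sup>2)/2 + lam))\<bar>
        \<le> \<bar>2*(k-h)*z\<bar> + \<bar>2*z*(-(k-h)*((k\<^sup>2+k*h+h\<^sup>2)/2 + lam))\<bar>"
    by (rule abs_triangle_ineq)
  also have "\<dots> = 2*\<bar>k-h\<bar>*\<bar>z\<bar> + 2*\<bar>k-h\<bar>*\<bar>z\<bar>*\<bar>(k\<^sup>2+k*h+h\<^sup>2)/2 + lam\<bar>"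
    by (simp only: abs_mult abs_minus_cancel abs_numeral) (simp only: mult_ac)
  also have "\<dots> \<le> 2*\<bar>k-h\<bar>*\<bar>z\<bar> + 2*\<bar>k-h\<bar>*\<bar>z\<bar>*L"
    using factor by (intro add_left_mono mult_left_mono) auto
  also have "\<dots> = (1 + L) * (2*\<bar>k-h\<bar>*\<bar>z\<bar>)" by (simp add: algebra_simps)
  also have "\<dots> \<le> (1 + L) * ((k-h)\<^sup>2 + z\<^sup>2)"
    using amgm by (intro mult_left_mono) (auto simp: L_def)
  finally show ?thesis unfolding force_diff L_def by (simp add: add.assoc)
qed

text \<open>Two solutions of the initial value problem on the same interval coincide: the energy of
  their difference vanishes by Gronwall, the bound M coming from compactness of [0, t].\<close>
lemma curv_ode_sol_unique:
  assumes sol_k: "curv_ode_sol mu lam kM k dk I" and sol_h: "curv_ode_sol mu lam kM h dh I"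
    and t: "t \<in> I"
  shows "k t = h t"
proof -
  from sol_k have I: "is_interval I" "0 \<in> I" and k0: "k 0 = kM" "dk 0 = 0"
    and dk: "\<And>s. s \<in> I \<Longrightarrow> (k has_real_derivative dk s) (at s)"
    and ddk: "\<And>s. s \<in> I \<Longrightarrow> (dk has_real_derivative (- ((k s) ^ 3) / 2 - lam * k s + mu)) (at s)"
    by (auto simp: curv_ode_sol_def)
  from sol_h have h0: "h 0 = kM" "dh 0 = 0"
    and dh: "\<And>s. s \<in> I \<Longrightarrow> (h has_real_derivative dh s) (at s)"
    and ddh: "\<And>s. s \<in> I \<Longrightarrow> (dh has_real_derivative (- ((h s) ^ 3) / 2 - lam * h s + mu)) (at s)"
    by (auto simp: curv_ode_sol_def)
  define a where "a = min 0 t"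
  define b where "b = max 0 t"
  have in_I: "x \<in> I" if "a \<le> x" "x \<le> b" for x
  proof (cases "0 \<le> t")
    case True
    then show ?thesis using mem_is_interval_1_I[OF I(1) I(2) t, of x] that by (auto simp: a_def b_def)
  next
    case False
    then show ?thesis using mem_is_interval_1_I[OF I(1) t I(2), of x] that by (auto simp: a_def b_def)
  qed
  have cont: "continuous_on {a..b} (\<lambda>x. \<bar>k x\<bar> + \<bar>h x\<bar>)"
    using in_I dk dh
    by (intro continuous_at_imp_continuous_on ballI continuous_intros) (auto intro: DERIV_isCont)
  have "\<exists>x\<in>{a..b}. \<forall>y\<in>{a..b}. \<bar>k y\<bar> + \<bar>h y\<bar> \<le> \<bar>k x\<bar> + \<bar>h x\<bar>"
    by (rule continuous_attains_sup[OF compact_Icc _ cont]) (simp add: a_def b_def)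
  then obtain x0 where x0_max: "\<forall>y\<in>{a..b}. \<bar>k y\<bar> + \<bar>h y\<bar> \<le> \<bar>k x0\<bar> + \<bar>h x0\<bar>"
    by blast
  define M where "M = \<bar>k x0\<bar> + \<bar>h x0\<bar>"
  have bounded_by_M: "\<bar>k y\<bar> \<le> M" "\<bar>h y\<bar> \<le> M" if "a \<le> y" "y \<le> b" for y
    using x0_max that unfolding M_def by force+
  define e where "e x = (k x - h x)\<^sup>2 + (dk x - dh x)\<^sup>2" for x
  define e' where "e' x = 2*(k x - h x)*(dk x - dh x) + 2*(dk x - dh x)*
      ((- ((k x)^3)/2 - lam * k x + mu) - (- ((h x)^3)/2 - lam * h x + mu))" for x
  have "e t = 0"
  proof (rule gronwall_vanishes[where e=e and e'=e' and a=a and b=b and C="1 + 3*M\<^sup>2/2 + \<bar>lam\<bar>"])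
    show "a \<le> 0" "0 \<le> b" "a \<le> t" "t \<le> b" by (auto simp: a_def b_def)
    show "e 0 = 0" by (simp add: e_def k0 h0)
    fix x assume x: "a \<le> x" "x \<le> b"
    show "(e has_real_derivative e' x) (at x)"
      unfolding e_def e'_def using in_I[OF x]
      by (auto intro!: derivative_eq_intros dk dh ddk ddh simp: field_simps)
    show "0 \<le> e x" by (simp add: e_def)
    show "\<bar>e' x\<bar> \<le> (1 + 3*M\<^sup>2/2 + \<bar>lam\<bar>) * e x"
      unfolding e_def e'_def by (rule energy_derivative_bound) (use bounded_by_M[OF x] in auto)
  qed
  then show ?thesis unfolding e_def by (simp add: add_nonneg_eq_0_iff)
qed

section \<open>The cn-quotient ansatz\<close>

definition cn_quotient :: "real \<Rightarrow> real \<Rightarrow> real \<Rightarrow> real \<Rightarrow> real \<Rightarrow> real \<Rightarrow> real" where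
  "cn_quotient al be ga m w s = (al * jacobi_cn m (w * s) + be) / (ga * jacobi_cn m (w * s) + 1)"

definition cn_quotient_deriv :: "real \<Rightarrow> real \<Rightarrow> real \<Rightarrow> real \<Rightarrow> real \<Rightarrow> real \<Rightarrow> real" where
  "cn_quotient_deriv al be ga m w s =
     - w * (al - be * ga) * jacobi_sn m (w * s) * jacobi_dn m (w * s) / (ga * jacobi_cn m (w * s) + 1)\<^sup>2"

lemma cn_quotient_denominator_pos:
  assumes "\<bar>ga\<bar> < 1"
  shows "0 < ga * jacobi_cn m u + 1"
proof -
  have "\<bar>ga * jacobi_cn m u\<bar> \<le> \<bar>ga\<bar>"
    using mult_left_mono[OF abs_jacobi_cn_le_1, of "\<bar>ga\<bar>" m u] by (simp add: abs_mult)
  then show ?thesis using assms by linarith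
qed

lemma bounded_range_cn_quotient:
  assumes "\<bar>ga\<bar> < 1"
  shows "bounded (range (cn_quotient al be ga m w))"
proof -
  have "\<bar>cn_quotient al be ga m w s\<bar> \<le> (\<bar>al\<bar> + \<bar>be\<bar>) / (1 - \<bar>ga\<bar>)" for s
  proof -
    define c where "c = jacobi_cn m (w * s)"
    have c: "\<bar>c\<bar> \<le> 1" by (simp add: c_def abs_jacobi_cn_le_1)
    have "\<bar>al * c\<bar> \<le> \<bar>al\<bar>" "\<bar>ga * c\<bar> \<le> \<bar>ga\<bar>"
      using mult_left_mono[OF c, of "\<bar>al\<bar>"] mult_left_mono[OF c, of "\<bar>ga\<bar>"] by (simp_all add: abs_mult)
    then have num: "\<bar>al * c + be\<bar> \<le> \<bar>al\<bar> + \<bar>be\<bar>" and den: "1 - \<bar>ga\<bar> \<le> ga * c + 1"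
      using abs_triangle_ineq[of "al * c" be] by linarith+
    have "\<bar>cn_quotient al be ga m w s\<bar> = \<bar>al * c + be\<bar> / (ga * c + 1)"
      using cn_quotient_denominator_pos[OF assms, of m "w * s"] by (simp add: cn_quotient_def c_def)
    also have "\<dots> \<le> (\<bar>al\<bar> + \<bar>be\<bar>) / (1 - \<bar>ga\<bar>)"
      by (rule frac_le) (use num den assms in auto)
    finally show ?thesis .
  qed
  then show ?thesis unfolding bounded_iff by (auto simp: real_norm_def)
qed

lemma cn_quotient_has_derivative:
  assumes "0 \<le> m" "m < 1" "\<bar>ga\<bar> < 1"
  shows "(cn_quotient al be ga m w has_real_derivative cn_quotient_deriv al be ga m w s) (at s)"
  unfolding cn_quotient_def[abs_def] cn_quotient_deriv_def
  using cn_quotient_denominator_pos[OF assms(3), of m "w * s"]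
  by (auto intro!: derivative_eq_intros jacobi_cn_scaled_has_derivative[OF assms(1,2)])
     (simp add: divide_simps power2_eq_square; simp add: algebra_simps)

lemma cn_quotient_deriv_has_derivative:
  assumes "0 \<le> m" "m < 1" "\<bar>ga\<bar> < 1"
  shows "(cn_quotient_deriv al be ga m w has_real_derivative
      - w\<^sup>2 * (al - be * ga) *
        ((jacobi_cn m (w * s) * (jacobi_dn m (w * s))\<^sup>2 - m * (jacobi_sn m (w * s))\<^sup>2 * jacobi_cn m (w * s))
           * (ga * jacobi_cn m (w * s) + 1)
         + 2 * ga * (jacobi_sn m (w * s))\<^sup>2 * (jacobi_dn m (w * s))\<^sup>2)
      / (ga * jacobi_cn m (w * s) + 1) ^ 3) (at s)"
  unfolding cn_quotient_deriv_def[abs_def]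
  using cn_quotient_denominator_pos[OF assms(3), of m "w * s"]
  by (auto intro!: derivative_eq_intros jacobi_cn_scaled_has_derivative[OF assms(1,2)]
         jacobi_sn_scaled_has_derivative[OF assms(1,2)] jacobi_dn_scaled_has_derivative[OF assms(1,2)])
     (simp add: divide_simps; algebra)

text \<open>With a = kM, b = km, after eliminating sn and dn via
  sn^2 = 1 - c^2 and dn^2 = 1 - m sn^2, the second derivative of K is a polynomial identity in
  c = cn; it holds modulo the defining relations of the parameters (cleared of the denominator
  A + B).\<close>
lemma cn_ansatz_polynomial_identity:
  fixes a b l A B al be ga m w2 c :: real
  assumes "A\<^sup>2 = 2*a\<^sup>2 + (a+b)\<^sup>2 + 4*l" and "B\<^sup>2 = 2*b\<^sup>2 + (a+b)\<^sup>2 + 4*l"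
    and "(A+B)*al = a*B - b*A" and "(A+B)*be = a*B + b*A" and "(A+B)*ga = B - A"
    and "4*A*B*m = (a-b)\<^sup>2 - (A-B)\<^sup>2" and "4*w2 = A*B"
  shows "(A+B)^3 * (- w2 * (al - be*ga) * ((c * (1 - m*(1-c\<^sup>2)) - m*(1-c\<^sup>2)*c) * (ga*c+1)
            + 2*ga*(1-c\<^sup>2)*(1 - m*(1-c\<^sup>2))))
       = (A+B)^3 * (- ((al*c+be)^3)/2 - l*(al*c+be)*(ga*c+1)\<^sup>2 + (a+b)*(4*l+a\<^sup>2+b\<^sup>2)/8 * (ga*c+1)^3)"
  using assms by algebra

lemma cn_ansatz_force_identity:
  fixes a b l A B al be ga m w c :: real
  assumes A2: "A\<^sup>2 = 2*a\<^sup>2 + (a+b)\<^sup>2 + 4*l" and B2: "B\<^sup>2 = 2*b\<^sup>2 + (a+b)\<^sup>2 + 4*l"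
    and pos: "0 < A" "0 < B"
    and al: "al = (a*B - b*A)/(A+B)" and be: "be = (a*B + b*A)/(A+B)" and ga: "ga = (B-A)/(A+B)"
    and m: "m = ((a-b)\<^sup>2 - (A-B)\<^sup>2)/(4*A*B)" and w: "w\<^sup>2 = A*B/4"
    and den: "ga*c + 1 \<noteq> 0"
  shows "- w\<^sup>2 * (al - be*ga) * ((c * (1 - m*(1-c\<^sup>2)) - m*(1-c\<^sup>2)*c) * (ga*c+1)
            + 2*ga*(1-c\<^sup>2)*(1 - m*(1-c\<^sup>2))) / (ga*c+1)^3
       = - (((al*c+be)/(ga*c+1))^3)/2 - l*((al*c+be)/(ga*c+1)) + (a+b)*(4*l+a\<^sup>2+b\<^sup>2)/8"
proof -
  have AB: "(A+B)^3 \<noteq> 0" using pos by simp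
  have rel: "(A+B)*al = a*B - b*A" "(A+B)*be = a*B + b*A" "(A+B)*ga = B - A"
    using pos by (simp_all add: al be ga)
  have rel_m: "4*A*B*m = (a-b)\<^sup>2 - (A-B)\<^sup>2" using pos by (simp add: m)
  have rel_w: "4*w\<^sup>2 = A*B" using w by simp
  define D where "D = ga*c + 1"
  have "- w\<^sup>2 * (al - be*ga) * ((c * (1 - m*(1-c\<^sup>2)) - m*(1-c\<^sup>2)*c) * D
            + 2*ga*(1-c\<^sup>2)*(1 - m*(1-c\<^sup>2)))
       = - ((al*c+be)^3)/2 - l*(al*c+be)*D\<^sup>2 + (a+b)*(4*l+a\<^sup>2+b\<^sup>2)/8 * D^3"
    using mult_left_cancel[OF AB] cn_ansatz_polynomial_identity[OF A2 B2 rel rel_m rel_w]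
    unfolding D_def by blast
  moreover have "(- ((al*c+be)^3)/2 - l*(al*c+be)*D\<^sup>2 + (a+b)*(4*l+a\<^sup>2+b\<^sup>2)/8 * D^3) / D^3
       = - (((al*c+be)/D)^3)/2 - l*((al*c+be)/D) + (a+b)*(4*l+a\<^sup>2+b\<^sup>2)/8"
    using den unfolding D_def[symmetric] by (simp add: field_simps power2_eq_square power3_eq_cube)
  ultimately show ?thesis unfolding D_def by simp
qed


lemma cn_ansatz_parameters:
  fixes kM km lam :: real
  assumes lam: "0 \<le> lam" and turning: "0 < kM" "-kM < km" "km < kM"
  defines "A \<equiv> sqrt (2*kM\<^sup>2 + (kM+km)\<^sup>2 + 4*lam)"
    and "B \<equiv> sqrt (2*km\<^sup>2 + (kM+km)\<^sup>2 + 4*lam)"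
  shows "A\<^sup>2 = 2*kM\<^sup>2 + (kM+km)\<^sup>2 + 4*lam" "B\<^sup>2 = 2*km\<^sup>2 + (kM+km)\<^sup>2 + 4*lam"
    and "0 < B" "B < A"
    and "0 < ((kM-km)\<^sup>2 - (A-B)\<^sup>2)/(4*A*B)" "((kM-km)\<^sup>2 - (A-B)\<^sup>2)/(4*A*B) < 1"
proof -
  define S where "S = kM + km"
  have "0 < S" using turning by (simp add: S_def)
  then have S2: "0 < S\<^sup>2" by simp
  have A: "A = sqrt (2*kM\<^sup>2 + S\<^sup>2 + 4*lam)" and B: "B = sqrt (2*km\<^sup>2 + S\<^sup>2 + 4*lam)"
    by (simp_all add: A_def B_def S_def)
  have radicands: "0 < 2*kM\<^sup>2 + S\<^sup>2 + 4*lam" "0 < 2*km\<^sup>2 + S\<^sup>2 + 4*lam"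
    using S2 lam zero_le_power2[of kM] zero_le_power2[of km] by linarith+
  show A2: "A\<^sup>2 = 2*kM\<^sup>2 + (kM+km)\<^sup>2 + 4*lam" and B2: "B\<^sup>2 = 2*km\<^sup>2 + (kM+km)\<^sup>2 + 4*lam"
    using radicands by (simp_all add: A B S_def)
  show B_pos: "0 < B" using radicands by (simp add: B)
  have "0 < (kM - km) * (kM + km)" using turning by simp
  then have km_kM: "km\<^sup>2 < kM\<^sup>2" by (simp add: power2_eq_square algebra_simps)
  show B_A: "B < A" unfolding A B using km_kM by simp
  have S_A: "S < A" unfolding A
    by (rule real_less_rsqrt) (use lam km_kM zero_le_power2[of km] in linarith)
  have S_B: "S \<le> B" unfolding B using lam by (intro real_le_rsqrt) simp
  have kM_A: "kM < A" unfolding A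
    by (rule real_less_rsqrt) (use lam S2 zero_le_power2[of kM] in linarith)
  have km_B: "-km < B" unfolding B
    by (rule real_less_rsqrt) (use lam S2 zero_le_power2[of km] in \<open>simp only: power2_minus; linarith\<close>)
  have "(A - B) * (A + B) = A\<^sup>2 - B\<^sup>2" by (simp add: power2_eq_square algebra_simps)
  also have "\<dots> = 2 * (kM - km) * S" using A2 B2 by (simp add: S_def power2_eq_square algebra_simps)
  also have "\<dots> = (kM - km) * (2 * S)" by simp
  also have "\<dots> < (kM - km) * (A + B)"
    using S_A S_B turning by (intro mult_strict_left_mono) auto
  finally have "A - B < kM - km" using B_pos B_A by (simp add: mult_less_cancel_right)
  then have "(A - B)\<^sup>2 < (kM - km)\<^sup>2" using B_A by (intro power_strict_mono) auto
  moreover have "0 < 4*A*B" using B_pos B_A by simp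
  ultimately show "0 < ((kM-km)\<^sup>2 - (A-B)\<^sup>2)/(4*A*B)" by simp
  have "kM - km < A + B" using kM_A km_B by simp
  then have "(kM - km)\<^sup>2 < (A + B)\<^sup>2" using turning by (intro power_strict_mono) auto
  then have "(kM-km)\<^sup>2 - (A-B)\<^sup>2 < 4*A*B" by (simp add: power2_eq_square algebra_simps)
  with \<open>0 < 4*A*B\<close> show "((kM-km)\<^sup>2 - (A-B)\<^sup>2)/(4*A*B) < 1" by simp
qed

lemma cn_quotient_solves_curv_ode:
  fixes kM km lam mu :: real
  assumes lam: "0 \<le> lam" and turning: "0 < kM" "-kM < km" "km < kM"
    and mu: "mu = (kM + km) * (4*lam + kM\<^sup>2 + km\<^sup>2) / 8"
  shows "\<exists>al be ga w m. -1 < ga \<and> ga < 0 \<and> 0 < w \<and> 0 < m \<and> m < 1 \<and>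
           curv_ode_sol mu lam kM (cn_quotient al be ga m w) (cn_quotient_deriv al be ga m w) UNIV"
proof -
  define A where "A = sqrt (2*kM\<^sup>2 + (kM+km)\<^sup>2 + 4*lam)"
  define B where "B = sqrt (2*km\<^sup>2 + (kM+km)\<^sup>2 + 4*lam)"
  note AB = cn_ansatz_parameters[OF lam turning, folded A_def B_def]
  have A_pos: "0 < A" using AB(3,4) by linarith
  define al where "al = (kM*B - km*A)/(A+B)"
  define be where "be = (kM*B + km*A)/(A+B)"
  define ga where "ga = (B-A)/(A+B)"
  define m where "m = ((kM-km)\<^sup>2 - (A-B)\<^sup>2)/(4*A*B)"
  define w where "w = sqrt (A*B) / 2"
  have ga: "-1 < ga" "ga < 0" using AB(3,4) by (auto simp: ga_def field_simps)
  then have abs_ga: "\<bar>ga\<bar> < 1" by simp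
  have m: "0 < m" "m < 1" using AB(5,6) by (simp_all add: m_def)
  have w: "0 < w" "w\<^sup>2 = A*B/4" using A_pos AB(3) by (simp_all add: w_def power_divide)
  let ?K = "cn_quotient al be ga m w" and ?dK = "cn_quotient_deriv al be ga m w"
  have "A + B \<noteq> 0" using A_pos AB(3) by simp
  then have "al + be = 2*kM*B/(A+B)" "ga + 1 = 2*B/(A+B)"
    by (simp_all add: al_def be_def ga_def add_divide_distrib[symmetric] field_simps)
  then have "al + be = kM * (ga + 1)" by simp
  then have "?K 0 = kM" using ga m by (simp add: cn_quotient_def jacobi_cn_zero)
  moreover have "?dK 0 = 0" using m by (simp add: cn_quotient_deriv_def jacobi_sn_zero)
  moreover have "(?dK has_real_derivative - ((?K s) ^ 3) / 2 - lam * ?K s + mu) (at s)" for s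
  proof -
    let ?c = "jacobi_cn m (w * s)"
    have sn2: "(jacobi_sn m (w * s))\<^sup>2 = 1 - ?c\<^sup>2"
      and dn2: "(jacobi_dn m (w * s))\<^sup>2 = 1 - m * (1 - ?c\<^sup>2)"
      using jacobi_cn_squared[of m "w * s"] jacobi_dn_squared[OF m(2), of "w * s"] by simp_all
    have "ga * ?c + 1 \<noteq> 0" using cn_quotient_denominator_pos[OF abs_ga] by (metis less_irrefl)
    note force = cn_ansatz_force_identity[OF AB(1,2) A_pos AB(3) al_def be_def ga_def m_def w(2) this]
    show ?thesis
      using cn_quotient_deriv_has_derivative[OF less_imp_le[OF m(1)] m(2) abs_ga, of al be w s]
      unfolding dn2 sn2 force mu cn_quotient_def .
  qed
  ultimately have "curv_ode_sol mu lam kM ?K ?dK UNIV"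
    using cn_quotient_has_derivative[OF less_imp_le[OF m(1)] m(2) abs_ga]
    by (simp add: curv_ode_sol_def)
  then show ?thesis using ga w m by blast
qed

section \<open>The turning values of a solution with maximum kM\<close>

lemma constant_curv_ode_sol:
  assumes "- (kM ^ 3) / 2 - lam * kM + mu = 0" and "open I" "is_interval I" "0 \<in> I"
  shows "curv_ode_sol mu lam kM (\<lambda>_. kM) (\<lambda>_. 0) I"
  using assms by (simp add: curv_ode_sol_def)

text \<open>If the force is positive at kM, then k'' > 0 at 0, so k' becomes positive right after 0
  and k rises above its initial value kM.\<close>
lemma curv_ode_sol_rises:
  assumes sol: "curv_ode_sol mu lam kM k dk I" and force: "0 < - (kM ^ 3) / 2 - lam * kM + mu"
  shows "\<exists>s\<in>I. kM < k s"
proof -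
  from sol have I: "open I" "0 \<in> I" and k0: "k 0 = kM" "dk 0 = 0"
    and dk: "\<And>s. s \<in> I \<Longrightarrow> (k has_real_derivative dk s) (at s)"
    and ddk: "(dk has_real_derivative (- (kM ^ 3) / 2 - lam * kM + mu)) (at 0)"
    by (auto simp: curv_ode_sol_def)
  obtain d where d: "0 < d" and dk_pos: "\<And>h. 0 < h \<Longrightarrow> h < d \<Longrightarrow> 0 < dk h"
    using DERIV_pos_inc_right[OF ddk force] k0 by auto
  obtain e where e: "0 < e" "ball 0 e \<subseteq> I" using I open_contains_ball by blast
  define h where "h = min d e / 2"
  have h: "0 < h" "h < d" "h < e" using d e by (auto simp: h_def)
  have in_I: "x \<in> I" if "0 \<le> x" "x \<le> h" for x
    using e(2) that h by (auto simp: dist_real_def)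
  obtain z where z: "0 < z" "z < h" "k h - k 0 = (h - 0) * dk z"
    using MVT2[of 0 h k dk] h in_I dk by auto
  have "0 < h * dk z" using dk_pos[of z] z h by simp
  then show ?thesis using z k0 in_I[of h] h by force
qed

lemma force_negative_at_maximum:
  assumes sol: "curv_ode_sol mu lam kM k dk I"
    and nonconst: "\<exists>s\<in>I. k s \<noteq> kM" and kmax: "\<forall>s\<in>I. k s \<le> kM"
  shows "- (kM ^ 3) / 2 - lam * kM + mu < 0"
proof (rule ccontr)
  assume "\<not> ?thesis"
  then consider "- (kM ^ 3) / 2 - lam * kM + mu = 0" | "0 < - (kM ^ 3) / 2 - lam * kM + mu"
    by linarith
  then show False
  proof cases
    case 1
    with sol have "curv_ode_sol mu lam kM (\<lambda>_. kM) (\<lambda>_. 0) I"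
      by (intro constant_curv_ode_sol) (auto simp: curv_ode_sol_def)
    then show False using curv_ode_sol_unique[OF sol] nonconst by metis
  next
    case 2
    then show False using curv_ode_sol_rises[OF sol] kmax by force
  qed
qed

text \<open>A negative force at kM forces kM > 0, and the cubic
  x \<mapsto> (kM + x)(4 lam + kM^2 + x^2)/8 - mu changes sign on [-kM, kM]; its root km is the
  minimum of the solution, reached when the energy of the motion is used up again.\<close>
lemma second_turning_value:
  fixes mu lam kM :: real
  assumes mu: "0 < mu" and lam: "0 \<le> lam" and force: "- (kM ^ 3) / 2 - lam * kM + mu < 0"
  shows "0 < kM \<and> (\<exists>km. -kM < km \<and> km < kM \<and> mu = (kM + km) * (4*lam + kM\<^sup>2 + km\<^sup>2) / 8)"
proof -
  have kM: "0 < kM"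
  proof (rule ccontr)
    assume "\<not> 0 < kM"
    then have "kM ^ 3 \<le> 0" "lam * kM \<le> 0"
      using lam by (simp_all add: power3_eq_cube mult_nonpos_nonpos mult_nonneg_nonpos)
    then show False using force mu by linarith
  qed
  define p where "p x = (kM + x) * (4*lam + kM\<^sup>2 + x\<^sup>2) / 8 - mu" for x
  have p_neg: "p (-kM) < 0" using mu by (simp add: p_def)
  have "p kM = - (- (kM ^ 3) / 2 - lam * kM + mu)"
    by (simp add: p_def power2_eq_square power3_eq_cube field_simps)
  then have p_pos: "0 < p kM" using force by simp
  have "isCont p x" for x unfolding p_def by (auto intro!: continuous_intros)
  then obtain km where km: "-kM \<le> km" "km \<le> kM" "p km = 0"
    using IVT[of p "-kM" 0 kM] p_neg p_pos kM by auto
  have "km \<noteq> -kM" "km \<noteq> kM" using km(3) p_neg p_pos by auto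
  then have "-kM < km" "km < kM" using km(1,2) by linarith+
  moreover have "mu = (kM + km) * (4*lam + kM\<^sup>2 + km\<^sup>2) / 8" using km(3) by (simp add: p_def)
  ultimately show ?thesis using kM by blast
qed

theorem mainTheorem16:
  fixes mu lam kM :: real and k dk :: "real \<Rightarrow> real" and I :: "real set"
  assumes "mu > 0" and "lam \<ge> 0"
    and sol: "curv_ode_maximal_sol mu lam kM k dk I"
    and nonconst: "\<exists>s\<in>I. k s \<noteq> kM"
    and kmax: "\<forall>s\<in>I. k s \<le> kM"
  shows "I = UNIV \<and> bounded (range k) \<and>
    (\<exists>\<alpha> \<beta> \<gamma> \<omega> m :: real. -1 < \<gamma> \<and> \<gamma> < 0 \<and> \<omega> > 0 \<and> 0 < m \<and> m < 1 \<and>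
       (\<forall>s. k s = (\<alpha> * jacobi_cn m (\<omega> * s) + \<beta>) / (\<gamma> * jacobi_cn m (\<omega> * s) + 1)))"
proof -
  from sol have sol_I: "curv_ode_sol mu lam kM k dk I"
    and maximal: "\<And>h dh J. curv_ode_sol mu lam kM h dh J \<Longrightarrow> J \<subseteq> I"
    by (auto simp: curv_ode_maximal_sol_def)
  obtain km where "0 < kM" "-kM < km" "km < kM" "mu = (kM + km) * (4*lam + kM\<^sup>2 + km\<^sup>2) / 8"
    using second_turning_value[OF assms(1,2) force_negative_at_maximum[OF sol_I nonconst kmax]]
    by blast
  then obtain al be ga w m where params: "-1 < ga" "ga < 0" "0 < w" "0 < m" "m < 1"
    and sol_K: "curv_ode_sol mu lam kM (cn_quotient al be ga m w) (cn_quotient_deriv al be ga m w) UNIV"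
    using cn_quotient_solves_curv_ode[OF assms(2)] by blast
  have I: "I = UNIV" using maximal[OF sol_K] by auto
  have k: "k = cn_quotient al be ga m w"
    using curv_ode_sol_unique[OF sol_I sol_K[folded I]] by (auto simp: I)
  have "bounded (range k)"
    unfolding k by (rule bounded_range_cn_quotient) (use params in simp)
  with I params show ?thesis unfolding k cn_quotient_def by blast
qed

end
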